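(* Let $c>0$, $\gamma>0$, $T>0$, $n\in\{1,2,3,\dots\}$, and let $\{\xi_{tT}\}_{0\le t\le T}$ be a stable-1/2 random bridge with activity parameter $c$ whose terminal law has density $f_{GIG}(z;n-\tfrac12,cT,\gamma)$. Let $\{\mathcal F^\xi_t\}$ be its natural filtration. Then for $0\le t<T$ the best-estimate ultimate loss $U_{tT}=\mathbb{E}[\xi_{TT}\mid\mathcal F^\xi_t]$ is $$U_{tT}=\frac{\sum_{k=0}^{n+1}\binom{n+1}{k}m^{(n+1-k)}_{T-t}\, \xi_{tT}^k}{\sum_{k=0}^{n}\binom{n}{k}m^{(n-k)}_{T-t}\, \xi_{tT}^k}.$$
   Context: Let $f_t(x)=\mathbf 1_{\{x>0\}}\frac{ct}{\sqrt{2\pi}x^{3/2}}\exp\left(-\frac{c^2t^2}{2x}\right)$ be the density of $S_t$ for a stable-1/2 subordinator $\{S_t\}$ with activity parameter $c>0$ (a Lévy process with $\mathbb{E}[e^{-\lambda S_t}]=\exp(-ct\sqrt{\lambda}/\sqrt2)$). A process $\{\xi_{tT}\}_{0\le t\le T}$ is a stable-1/2 random bridge with terminal law $\nu$ if $\xi_{TT}$ has law $\nu$ and, for $\nu$-a.e. $z$, conditionally on $\xi_{TT}=z$ its finite-dimensional distributions on $(0,T)$ coincide with those of $\{S_t\}$ conditioned on $S_T=z$. The generalized inverse-Gaussian density is $f_{GIG}(x;\lambda,\delta,\gamma)=\mathbf 1_{\{x>0\}}(\gamma/\delta)^{\lambda}\frac{1}{2K_\lambda(\gamma\delta)}x^{\lambda-1}\exp\left(-\tfrac12(\delta^2x^{-1}+\gamma^2x)\right)$,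 with $K_\lambda$ the modified Bessel function of the third kind. Let $q_t(x)=f_{GIG}(x;-\tfrac12,ct,\gamma)=\mathbf 1_{\{x>0\}}\frac{ct}{\sqrt{2\pi}}x^{-3/2}\exp\left(-\frac{\gamma^2}{2x}\left(x-\frac{c}{\gamma}t\right)^2\right)$ be the inverse-Gaussian density, and for $k\ge0$ let $m^{(k)}_t=\int_0^\infty x^k q_t(x)\,dx$ be its $k$th moment (so $m^{(0)}_t=1$, $m^{(1)}_t=ct/\gamma$). *)

theory Defs
  imports "HOL-Probability.Probability"
begin

definition stable_half_density :: "real \<Rightarrow> real \<Rightarrow> real \<Rightarrow> real" where
  "stable_half_density c t x =
     (if x > 0 then c * t / (sqrt (2 * pi) * x powr (3/2)) * exp (- (c^2 * t^2) / (2 * x)) else 0)"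

definition besselK :: "real \<Rightarrow> real \<Rightarrow> real" where
  "besselK lam z = 1/2 * (LBINT u:{0<..}. u powr (lam - 1) * exp (- z / 2 * (u + 1 / u)))"

definition f_GIG :: "real \<Rightarrow> real \<Rightarrow> real \<Rightarrow> real \<Rightarrow> real" where
  "f_GIG lam \<delta> \<gamma> x =
     (if x > 0 then (\<gamma> / \<delta>) powr lam * (1 / (2 * besselK lam (\<gamma> * \<delta>))) * x powr (lam - 1)
                   * exp (- (1/2) * (\<delta>^2 / x + \<gamma>^2 * x))
      else 0)"

definition q_IG :: "real \<Rightarrow> real \<Rightarrow> real \<Rightarrow> real \<Rightarrow> real" where
  "q_IG c \<gamma> t x = f_GIG (-1/2) (c * t) \<gamma> x"

definition IG_moment :: "real \<Rightarrow> real \<Rightarrow> nat \<Rightarrow> real \<Rightarrow> real" where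
  "IG_moment c \<gamma> k t = (LBINT x:{0<..}. x ^ k * q_IG c \<gamma> t x)"

text \<open>Stable-1/2 random bridge on [0,T] with activity parameter c whose terminal law has
  Lebesgue density p.  Each xi t is a random variable, xi 0 = 0 a.s., and for every m and every
  partition 0 = s_0 < s_1 < ... < s_m < s_(m+1) = T, the joint law of
  (xi_(s_1), ..., xi_(s_m), xi_T) is p(z) dz times the law of (S_(s_1),...,S_(s_m)) conditioned
  on S_T = z, i.e. it has density
  prod_(i=1..m+1) f_(s_i - s_(i-1))(x_i - x_(i-1)) / f_T(x_(m+1)) * p(x_(m+1))   (x_0 = 0).
  For m = 0 this says that xi_T has density p.\<close>
definition stable_half_bridge ::
    "'a measure \<Rightarrow> real \<Rightarrow> real \<Rightarrow> (real \<Rightarrow> real) \<Rightarrow> (real \<Rightarrow> 'a \<Rightarrow> real) \<Rightarrow> bool" where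
  "stable_half_bridge M c T p \<xi> \<longleftrightarrow>
     (\<forall>t\<in>{0..T}. \<xi> t \<in> borel_measurable M) \<and>
     (AE \<omega> in M. \<xi> 0 \<omega> = 0) \<and>
     (\<forall>(m::nat) (s::nat \<Rightarrow> real).
        s 0 = 0 \<and> s (m + 1) = T \<and> (\<forall>i\<in>{1..m+1}. s (i - 1) < s i) \<longrightarrow>
        distr M (PiM {1..m+1} (\<lambda>_. lborel)) (\<lambda>\<omega>. \<lambda>i\<in>{1..m+1}. \<xi> (s i) \<omega>) =
        density (PiM {1..m+1} (\<lambda>_. lborel))
          (\<lambda>x. ennreal ((\<Prod>i\<in>{1..m+1}.
                 stable_half_density c (s i - s (i - 1))
                   (x i - (if i = 1 then 0 else x (i - 1))))
               / stable_half_density c T (x (m + 1)) * p (x (m + 1)))))"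

definition natural_filtration :: "'a measure \<Rightarrow> (real \<Rightarrow> 'a \<Rightarrow> real) \<Rightarrow> real \<Rightarrow> 'a measure" where
  "natural_filtration M \<xi> t =
     sigma (space M) {\<xi> s -` A \<inter> space M | s A. s \<in> {0..t} \<and> A \<in> sets borel}"

end

theory Submission
  imports Defs
begin

text \<open>Given \<open>\<xi>\<^sub>t = x\<close>, the terminal value of the bridge has the unnormalised density
  \<open>f\<^sub>T\<^sub>-\<^sub>t(y - x) / f\<^sub>T(y) * f\<^sub>G\<^sub>I\<^sub>G(y)\<close>. For the half-integer index \<open>n - 1/2\<close> this is, up to a factor
  depending on \<open>x\<close> only, \<open>q\<^sub>T\<^sub>-\<^sub>t(y - x) * y\<^sup>n\<close>: tilting the stable-1/2 density by
  \<open>exp (- \<gamma>\<^sup>2 w / 2)\<close> yields the inverse-Gaussian density, and the GIG factor \<open>y powr (n - 3/2)\<close>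
  absorbs the \<open>y powr (-3/2)\<close> of \<open>f\<^sub>T\<close>. Hence the conditional mean is
  \<open>E (x + W)\<^bsup>n+1\<^esup> / E (x + W)\<^sup>n\<close> with \<open>W\<close> inverse-Gaussian, and the binomial theorem gives the
  stated ratio of moment sums. The Markov property needed to condition on the whole past is
  checked on finite-dimensional cylinder sets, by integrating out the last coordinate of the
  finite-dimensional density; a \<open>\<pi>\<close>-\<open>\<lambda>\<close> argument extends it to the natural filtration.\<close>

section \<open>Conditional expectation through an intersection-stable generator\<close>

lemma nn_integral_indicator_eq_on_sigma_sets:
  fixes f g :: "'a \<Rightarrow> ennreal"
  assumes subalg: "subalgebra M F"
    and sets_F: "sets F = sigma_sets (space M) G" and G: "Int_stable G" "G \<subseteq> Pow (space M)" "space M \<in> G"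
    and f[measurable]: "f \<in> borel_measurable M" and g[measurable]: "g \<in> borel_measurable M"
    and finite: "(\<integral>\<^sup>+ x. f x \<partial>M) \<noteq> \<infinity>"
    and eq: "\<And>A. A \<in> G \<Longrightarrow> (\<integral>\<^sup>+ x. indicator A x * f x \<partial>M) = (\<integral>\<^sup>+ x. indicator A x * g x \<partial>M)"
    and A: "A \<in> sets F"
  shows "(\<integral>\<^sup>+ x. indicator A x * f x \<partial>M) = (\<integral>\<^sup>+ x. indicator A x * g x \<partial>M)"
proof -
  define \<mu> where "\<mu> h = restr_to_subalg (density M h) F" for h :: "'a \<Rightarrow> ennreal"
  have sets_\<mu>: "sets (\<mu> h) = sigma_sets (space M) G" for h
    unfolding \<mu>_def sets_F[symmetric] using subalg
    by (intro sets_restr_to_subalg) (auto simp: subalgebra_def)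
  have emeasure_\<mu>: "emeasure (\<mu> h) A = (\<integral>\<^sup>+ x. indicator A x * h x \<partial>M)"
    if [measurable]: "h \<in> borel_measurable M" and A: "A \<in> sets F" for h A
  proof -
    have "A \<in> sets M" using A subalg by (auto simp: subalgebra_def)
    moreover have "subalgebra (density M h) F" using subalg by (simp add: subalgebra_def)
    ultimately show ?thesis
      unfolding \<mu>_def using A by (simp add: emeasure_restr_to_subalg emeasure_density mult.commute)
  qed
  have "\<mu> f = \<mu> g"
  proof (rule measure_eqI_generator_eq[OF G(1,2) _ sets_\<mu> sets_\<mu>])
    show "emeasure (\<mu> f) X = emeasure (\<mu> g) X" if "X \<in> G" for X
      using that eq sets_F by (simp add: emeasure_\<mu>)
    show "range (\<lambda>_. space M) \<subseteq> G" "(\<Union>i. space M) = space M" using G(3) by auto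
    have "(\<integral>\<^sup>+ x. indicator (space M) x * f x \<partial>M) = (\<integral>\<^sup>+ x. f x \<partial>M)"
      by (intro nn_integral_cong) simp
    then show "emeasure (\<mu> f) (space M) \<noteq> \<infinity>" for i :: nat
      using G(3) sets_F finite by (simp add: emeasure_\<mu>)
  qed
  then show ?thesis using emeasure_\<mu>[OF f A] emeasure_\<mu>[OF g A] by simp
qed

lemma real_cond_exp_eqI_Int_stable:
  fixes f g :: "'a \<Rightarrow> real"
  assumes "finite_measure M" and subalg: "subalgebra M F"
    and sets_F: "sets F = sigma_sets (space M) G" and G: "Int_stable G" "G \<subseteq> Pow (space M)" "space M \<in> G"
    and f: "integrable M f" "AE x in M. f x \<ge> 0"
    and g: "integrable M g" "AE x in M. g x \<ge> 0" "g \<in> borel_measurable F"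
    and eq: "\<And>A. A \<in> G \<Longrightarrow>
      (\<integral>\<^sup>+ x. indicator A x * ennreal (f x) \<partial>M) = (\<integral>\<^sup>+ x. indicator A x * ennreal (g x) \<partial>M)"
  shows "AE x in M. real_cond_exp M F f x = g x"
proof -
  interpret finite_measure M by fact
  interpret finite_measure_subalgebra M F by unfold_locales (rule subalg)
  have [measurable]: "f \<in> borel_measurable M" "g \<in> borel_measurable M"
    using f(1) g(1) by auto
  show ?thesis
  proof (rule real_cond_exp_charact)
    fix A assume A: "A \<in> sets F"
    then have [measurable]: "A \<in> sets M" using subalg by (auto simp: subalgebra_def)
    have set_integral: "(\<integral>x\<in>A. h x \<partial>M) = enn2real (\<integral>\<^sup>+ x. indicator A x * ennreal (h x) \<partial>M)"
      if [measurable]: "h \<in> borel_measurable M" and "AE x in M. h x \<ge> 0" for h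
    proof -
      have "AE x in M. 0 \<le> indicator A x * h x" using that(2) by eventually_elim simp
      then have "(\<integral>x\<in>A. h x \<partial>M) = enn2real (\<integral>\<^sup>+ x. ennreal (indicator A x * h x) \<partial>M)"
        unfolding set_lebesgue_integral_def real_scaleR_def by (rule integral_eq_nn_integral[rotated]) measurable
      then show ?thesis by (simp add: ennreal_mult' ennreal_indicator)
    qed
    have "(\<integral>\<^sup>+ x. ennreal (f x) \<partial>M) \<noteq> \<infinity>" using nn_integral_eq_integral[OF f] by simp
    then have "(\<integral>\<^sup>+ x. indicator A x * ennreal (f x) \<partial>M) = (\<integral>\<^sup>+ x. indicator A x * ennreal (g x) \<partial>M)"
      by (intro nn_integral_indicator_eq_on_sigma_sets[OF subalg sets_F G _ _ _ eq A]) measurable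
    then show "(\<integral>x\<in>A. f x \<partial>M) = (\<integral>x\<in>A. g x \<partial>M)"
      using f g by (simp add: set_integral)
  qed (use f g in auto)
qed

section \<open>Cylinder sets of the natural filtration\<close>

definition cylinder_sets :: "'a measure \<Rightarrow> (real \<Rightarrow> 'a \<Rightarrow> real) \<Rightarrow> real \<Rightarrow> 'a set set" where
  "cylinder_sets M \<xi> t =
     {{\<omega>\<in>space M. \<forall>j\<in>J. \<xi> j \<omega> \<in> B j} | J B. finite J \<and> J \<subseteq> {0..t} \<and> (\<forall>j. B j \<in> sets borel)}"

lemma space_in_cylinder_sets: "space M \<in> cylinder_sets M \<xi> t"
  unfolding cylinder_sets_def by (rule CollectI, rule exI[of _ "{}"]) auto

lemma cylinder_sets_subset_Pow: "cylinder_sets M \<xi> t \<subseteq> Pow (space M)"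
  unfolding cylinder_sets_def by auto

lemma Int_stable_cylinder_sets: "Int_stable (cylinder_sets M \<xi> t)"
  unfolding Int_stable_def
proof (intro ballI)
  fix a b assume "a \<in> cylinder_sets M \<xi> t" "b \<in> cylinder_sets M \<xi> t"
  then obtain J\<^sub>a B\<^sub>a J\<^sub>b B\<^sub>b
    where a: "a = {\<omega>\<in>space M. \<forall>j\<in>J\<^sub>a. \<xi> j \<omega> \<in> B\<^sub>a j}" "finite J\<^sub>a" "J\<^sub>a \<subseteq> {0..t}" "\<forall>j. B\<^sub>a j \<in> sets borel"
      and b: "b = {\<omega>\<in>space M. \<forall>j\<in>J\<^sub>b. \<xi> j \<omega> \<in> B\<^sub>b j}" "finite J\<^sub>b" "J\<^sub>b \<subseteq> {0..t}" "\<forall>j. B\<^sub>b j \<in> sets borel"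
    unfolding cylinder_sets_def by blast
  define B where "B j = (if j \<in> J\<^sub>a then B\<^sub>a j else UNIV) \<inter> (if j \<in> J\<^sub>b then B\<^sub>b j else UNIV)" for j
  have "a \<inter> b = {\<omega>\<in>space M. \<forall>j\<in>J\<^sub>a \<union> J\<^sub>b. \<xi> j \<omega> \<in> B j}" unfolding a b B_def by auto
  moreover have "\<forall>j. B j \<in> sets borel" unfolding B_def using a b by auto
  ultimately show "a \<inter> b \<in> cylinder_sets M \<xi> t"
    unfolding cylinder_sets_def
    by (intro CollectI exI[of _ "J\<^sub>a \<union> J\<^sub>b"] exI[of _ B]) (use a b in auto)
qed

lemma space_natural_filtration: "space (natural_filtration M \<xi> t) = space M"
  unfolding natural_filtration_def by (rule space_measure_of_conv)

lemma sets_natural_filtration_generator: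
  "sets (natural_filtration M \<xi> t) =
     sigma_sets (space M) {\<xi> s -` A \<inter> space M | s A. s \<in> {0..t} \<and> A \<in> sets borel}"
  unfolding natural_filtration_def by (rule sets_measure_of) auto

lemma measurable_natural_filtration:
  "s \<in> {0..t} \<Longrightarrow> \<xi> s \<in> borel_measurable (natural_filtration M \<xi> t)"
  by (rule measurableI) (auto simp: space_natural_filtration sets_natural_filtration_generator)

lemma sets_natural_filtration:
  "sets (natural_filtration M \<xi> t) = sigma_sets (space M) (cylinder_sets M \<xi> t)"
proof
  show "sets (natural_filtration M \<xi> t) \<subseteq> sigma_sets (space M) (cylinder_sets M \<xi> t)"
    unfolding sets_natural_filtration_generator
  proof (rule sigma_sets_mono')
    show "{\<xi> s -` A \<inter> space M | s A. s \<in> {0..t} \<and> A \<in> sets borel} \<subseteq> cylinder_sets M \<xi> t"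
    proof clarify
      fix s and A :: "real set" assume "s \<in> {0..t}" "A \<in> sets borel"
      then show "\<xi> s -` A \<inter> space M \<in> cylinder_sets M \<xi> t"
        unfolding cylinder_sets_def
        by (intro CollectI exI[of _ "{s}"] exI[of _ "\<lambda>_. A"]) auto
    qed
  qed
  have "cylinder_sets M \<xi> t \<subseteq> sets (natural_filtration M \<xi> t)"
  proof
    fix a assume "a \<in> cylinder_sets M \<xi> t"
    then obtain J B where a: "a = {\<omega>\<in>space M. \<forall>j\<in>J. \<xi> j \<omega> \<in> B j}"
      and J: "finite J" "J \<subseteq> {0..t}" and B: "\<forall>j. B j \<in> sets borel"
      unfolding cylinder_sets_def by blast
    have "{\<omega>\<in>space (natural_filtration M \<xi> t). \<xi> j \<omega> \<in> B j} \<in> sets (natural_filtration M \<xi> t)"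
      if "j \<in> J" for j
    proof -
      have "\<xi> j \<in> borel_measurable (natural_filtration M \<xi> t)"
        using J that by (intro measurable_natural_filtration) auto
      from measurable_sets_Collect[OF this, of "\<lambda>x. x \<in> B j"] show ?thesis using B by simp
    qed
    then have "{\<omega>\<in>space (natural_filtration M \<xi> t). \<forall>j\<in>J. \<xi> j \<omega> \<in> B j} \<in> sets (natural_filtration M \<xi> t)"
      by (rule sets.sets_Collect_finite_All[OF _ J(1)])
    then show "a \<in> sets (natural_filtration M \<xi> t)" unfolding a space_natural_filtration .
  qed
  then show "sigma_sets (space M) (cylinder_sets M \<xi> t) \<subseteq> sets (natural_filtration M \<xi> t)"
    using sets.sigma_sets_subset[of "cylinder_sets M \<xi> t" "natural_filtration M \<xi> t"]
    by (simp add: space_natural_filtration)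
qed

lemma subalgebra_natural_filtration:
  assumes "\<forall>s\<in>{0..t}. \<xi> s \<in> borel_measurable M"
  shows "subalgebra M (natural_filtration M \<xi> t)"
  unfolding subalgebra_def space_natural_filtration sets_natural_filtration_generator
  using assms by (intro conjI refl sets.sigma_sets_subset) (auto intro!: measurable_sets)

section \<open>Inverse-Gaussian densities and their moments\<close>

lemma powr_exp_bound:
  fixes a w :: real
  assumes a: "a > 0" and w: "w > 0"
  shows "w powr (-3/2) * exp (- a / w) \<le> 1 + 4 / a^2"
proof -
  define v where "v = 1 / w"
  have v: "v > 0" using w by (simp add: v_def)
  have "w powr (-3/2) = v powr (3/2)" using w by (simp add: v_def powr_minus_divide powr_divide)
  moreover have "exp (- a / w) = exp (- (a * v))" by (simp add: v_def)
  ultimately have eq: "w powr (-3/2) * exp (- a / w) = v powr (3/2) * exp (- (a * v))" by simp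
  have powr_le: "v powr (3/2) \<le> 1 + v^2"
  proof (cases "v \<le> 1")
    case True
    then have "v powr (3/2) \<le> 1 powr (3/2)" using v by (intro powr_mono2) auto
    then have "v powr (3/2) \<le> 1" by simp
    then show ?thesis using zero_le_power2[of v] by linarith
  next
    case False
    then have "v powr (3/2) \<le> v powr 2" by (intro powr_mono) auto
    then show ?thesis using v by (simp add: powr_realpow)
  qed
  have "a * v / 2 \<le> exp (a * v / 2)" using exp_ge_add_one_self[of "a * v / 2"] by linarith
  then have "(a * v / 2)^2 \<le> (exp (a * v / 2))^2" using a v by (intro power_mono) auto
  also have "\<dots> = exp (a * v)" by (simp add: power2_eq_square exp_add[symmetric])
  finally have exp_ge: "(a * v / 2)^2 \<le> exp (a * v)" .
  have "v^2 * exp (- (a * v)) = v^2 / exp (a * v)" by (simp add: exp_minus field_simps)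
  also have "\<dots> \<le> v^2 / (a * v / 2)^2" using a v exp_ge by (intro divide_left_mono) auto
  also have "\<dots> = 4 / a^2" using a v by (simp add: field_simps power2_eq_square)
  finally have square_le: "v^2 * exp (- (a * v)) \<le> 4 / a^2" .
  have "v powr (3/2) * exp (- (a * v)) \<le> (1 + v^2) * exp (- (a * v))"
    using powr_le by (intro mult_right_mono) auto
  also have "\<dots> = exp (- (a * v)) + v^2 * exp (- (a * v))" by (simp add: algebra_simps)
  also have "\<dots> \<le> 1 + 4 / a^2" using square_le a v by (intro add_mono) auto
  finally show ?thesis unfolding eq .
qed

lemma integrable_power_exp:
  fixes b :: real
  assumes b: "b > 0"
  shows "integrable lborel (\<lambda>w. indicator {0<..} w * (w ^ i * exp (- b * w)))"
proof -
  have "integrable lborel (\<lambda>x. erlang_density 0 b x * x ^ i)"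
    using nn_integral_erlang_ith_moment[OF b, of 0 i] b
    by (intro integrableI_nonneg) (auto simp: erlang_density_def)
  then have "integrable lborel (\<lambda>x. (1/b) * (erlang_density 0 b x * x ^ i))" by simp
  then show ?thesis
    by (rule Bochner_Integration.integrable_bound)
       (use b in \<open>auto simp: erlang_density_def indicator_def\<close>)
qed

lemma integrable_power_IG_kernel:
  fixes A B :: real
  assumes A: "A > 0" and B: "B > 0"
  shows "integrable lborel
           (\<lambda>w. indicator {0<..} w * (w ^ i * (w powr (-3/2) * exp (- (A / w + B * w)))))"
proof -
  have "integrable lborel (\<lambda>w. (1 + 4/A^2) * (indicator {0<..} w * (w ^ i * exp (- B * w))))"
    using integrable_power_exp[OF B] by simp
  then show ?thesis
  proof (rule Bochner_Integration.integrable_bound)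
    show "AE w in lborel. norm (indicator {0<..} w * (w ^ i * (w powr (-3/2) * exp (- (A / w + B * w)))))
        \<le> norm ((1 + 4/A^2) * (indicator {0<..} w * (w ^ i * exp (- B * w))))"
    proof (rule AE_I2)
      fix w :: real
      show "norm (indicator {0<..} w * (w ^ i * (w powr (-3/2) * exp (- (A / w + B * w)))))
        \<le> norm ((1 + 4/A^2) * (indicator {0<..} w * (w ^ i * exp (- B * w))))"
      proof (cases "w > 0")
        case True
        have "w powr (-3/2) * exp (- (A / w + B * w)) = (w powr (-3/2) * exp (- A / w)) * exp (- B * w)"
          by (simp add: exp_add[symmetric] algebra_simps)
        also have "\<dots> \<le> (1 + 4/A^2) * exp (- B * w)"
          using powr_exp_bound[OF A True] by (intro mult_right_mono) auto
        finally have "w ^ i * (w powr (-3/2) * exp (- (A / w + B * w))) \<le> w ^ i * ((1 + 4/A^2) * exp (- B * w))"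
          using True by (intro mult_left_mono) auto
        then show ?thesis using True by (simp add: abs_mult algebra_simps)
      qed simp
    qed
  qed measurable
qed

lemma integral_pos_if_pos_on_positives:
  fixes f :: "real \<Rightarrow> real"
  assumes f: "integrable lborel f" and nonneg: "\<And>x. f x \<ge> 0" and pos: "\<And>x. x > 0 \<Longrightarrow> f x > 0"
  shows "integral\<^sup>L lborel f > 0"
proof -
  have "integral\<^sup>L lborel f \<noteq> 0"
  proof
    assume "integral\<^sup>L lborel f = 0"
    then have "AE x in lborel. f x = 0" using integral_nonneg_eq_0_iff_AE[OF f] nonneg by auto
    then obtain N where N: "{x \<in> space lborel. f x \<noteq> 0} \<subseteq> N" "emeasure lborel N = 0" "N \<in> sets lborel"
      by (rule AE_E)
    have "{0<..<1::real} \<subseteq> N" using N(1) pos by (force dest: pos)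
    then have "emeasure lborel {0<..<1::real} \<le> emeasure lborel N"
      using N(3) by (intro emeasure_mono) auto
    then show False using N(2) by simp
  qed
  moreover have "integral\<^sup>L lborel f \<ge> 0" using nonneg by (intro integral_nonneg_AE) auto
  ultimately show ?thesis by linarith
qed

lemma besselK_nonneg: "besselK lam z \<ge> 0"
  unfolding besselK_def set_lebesgue_integral_def
  by (auto intro!: integral_nonneg_AE simp: indicator_def)

lemma besselK_neg_half_pos:
  fixes z :: real
  assumes z: "z > 0"
  shows "besselK (-1/2) z > 0"
proof -
  have eq: "(\<lambda>u. indicator {0<..} u *\<^sub>R (u powr (-1/2 - 1) * exp (- z / 2 * (u + 1 / u))))
      = (\<lambda>u. indicator {0<..} u * (u ^ 0 * (u powr (-3/2) * exp (- ((z/2) / u + (z/2) * u)))))"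
    by (rule ext) (simp add: algebra_simps)
  have "integral\<^sup>L lborel (\<lambda>u. indicator {0<..} u *\<^sub>R (u powr (-1/2 - 1) * exp (- z / 2 * (u + 1 / u)))) > 0"
    unfolding eq using z
    by (intro integral_pos_if_pos_on_positives integrable_power_IG_kernel) (auto simp: indicator_def)
  then show ?thesis unfolding besselK_def set_lebesgue_integral_def by simp
qed

definition GIG_norm :: "real \<Rightarrow> real \<Rightarrow> real \<Rightarrow> real" where
  "GIG_norm lam \<delta> \<gamma> = (\<gamma> / \<delta>) powr lam * (1 / (2 * besselK lam (\<gamma> * \<delta>)))"

lemma f_GIG_eq:
  "f_GIG lam \<delta> \<gamma> x =
     (if x > 0 then GIG_norm lam \<delta> \<gamma> * x powr (lam - 1) * exp (- (1/2) * (\<delta>^2 / x + \<gamma>^2 * x)) else 0)"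
  unfolding f_GIG_def GIG_norm_def by simp

lemma GIG_norm_nonneg: "\<gamma> > 0 \<Longrightarrow> \<delta> > 0 \<Longrightarrow> GIG_norm lam \<delta> \<gamma> \<ge> 0"
  unfolding GIG_norm_def using besselK_nonneg[of lam "\<gamma> * \<delta>"] by auto

lemma GIG_norm_neg_half_pos: "\<gamma> > 0 \<Longrightarrow> \<delta> > 0 \<Longrightarrow> GIG_norm (-1/2) \<delta> \<gamma> > 0"
  unfolding GIG_norm_def using besselK_neg_half_pos[of "\<gamma> * \<delta>"] by auto

lemma f_GIG_nonneg: "\<gamma> > 0 \<Longrightarrow> \<delta> > 0 \<Longrightarrow> f_GIG lam \<delta> \<gamma> x \<ge> 0"
  unfolding f_GIG_eq using GIG_norm_nonneg[of \<gamma> \<delta> lam] by auto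

lemma f_GIG_measurable[measurable]: "f_GIG lam \<delta> \<gamma> \<in> borel_measurable borel"
  unfolding f_GIG_def by measurable

lemma stable_half_density_nonneg: "c \<ge> 0 \<Longrightarrow> t \<ge> 0 \<Longrightarrow> stable_half_density c t x \<ge> 0"
  unfolding stable_half_density_def by auto

lemma stable_half_density_measurable[measurable]: "stable_half_density c t \<in> borel_measurable borel"
  unfolding stable_half_density_def by measurable

lemma q_IG_eq:
  "q_IG c \<gamma> t w =
     (if w > 0 then GIG_norm (-1/2) (c * t) \<gamma> * (w powr (-3/2) * exp (- ((c*t)^2/2 / w + \<gamma>^2/2 * w)))
      else 0)"
  unfolding q_IG_def f_GIG_eq by (simp add: algebra_simps)

lemma q_IG_measurable[measurable]: "q_IG c \<gamma> t \<in> borel_measurable borel"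
  unfolding q_IG_def by measurable

lemma q_IG_nonneg: "c > 0 \<Longrightarrow> \<gamma> > 0 \<Longrightarrow> t > 0 \<Longrightarrow> q_IG c \<gamma> t w \<ge> 0"
  unfolding q_IG_def by (rule f_GIG_nonneg) auto

lemma q_IG_pos: "c > 0 \<Longrightarrow> \<gamma> > 0 \<Longrightarrow> t > 0 \<Longrightarrow> w > 0 \<Longrightarrow> q_IG c \<gamma> t w > 0"
  unfolding q_IG_eq using GIG_norm_neg_half_pos[of \<gamma> "c * t"] by simp

lemma integrable_power_q_IG:
  assumes "c > 0" "\<gamma> > 0" "t > 0"
  shows "integrable lborel (\<lambda>w. w ^ k * q_IG c \<gamma> t w)"
proof -
  have eq: "(\<lambda>w. w ^ k * q_IG c \<gamma> t w) = (\<lambda>w. GIG_norm (-1/2) (c * t) \<gamma> *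
          (indicator {0<..} w * (w ^ k * (w powr (-3/2) * exp (- ((c*t)^2/2 / w + \<gamma>^2/2 * w))))))"
    by (rule ext) (simp add: q_IG_eq indicator_def)
  show ?thesis
    unfolding eq using assms by (intro integrable_mult_right integrable_power_IG_kernel) auto
qed

lemma IG_moment_eq_integral:
  "IG_moment c \<gamma> k t = integral\<^sup>L lborel (\<lambda>w. w ^ k * q_IG c \<gamma> t w)"
  unfolding IG_moment_def set_lebesgue_integral_def
  by (intro Bochner_Integration.integral_cong) (auto simp: q_IG_eq indicator_def)

lemma power_mult_q_IG_nonneg:
  assumes "c > 0" "\<gamma> > 0" "t > 0"
  shows "w ^ k * q_IG c \<gamma> t w \<ge> 0"
  using q_IG_nonneg[OF assms, of w] by (cases "w > 0") (auto simp: q_IG_eq)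

lemma IG_moment_pos:
  assumes "c > 0" "\<gamma> > 0" "t > 0"
  shows "IG_moment c \<gamma> k t > 0"
  unfolding IG_moment_eq_integral
  using power_mult_q_IG_nonneg[OF assms] q_IG_pos[OF assms]
  by (intro integral_pos_if_pos_on_positives integrable_power_q_IG assms) auto

lemma nn_integral_power_q_IG:
  assumes "c > 0" "\<gamma> > 0" "t > 0"
  shows "(\<integral>\<^sup>+ w. ennreal (w ^ k * q_IG c \<gamma> t w) \<partial>lborel) = ennreal (IG_moment c \<gamma> k t)"
  unfolding IG_moment_eq_integral using power_mult_q_IG_nonneg[OF assms]
  by (intro nn_integral_eq_integral integrable_power_q_IG assms AE_I2)

section \<open>The bridge kernel of a GIG terminal law\<close>

definition IG_shifted_moment :: "real \<Rightarrow> real \<Rightarrow> real \<Rightarrow> nat \<Rightarrow> real \<Rightarrow> real" where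
  "IG_shifted_moment c \<gamma> \<tau> N x = (\<Sum>k=0..N. real (N choose k) * IG_moment c \<gamma> (N - k) \<tau> * x ^ k)"

lemma IG_shifted_moment_pos:
  assumes c: "c > 0" and \<gamma>: "\<gamma> > 0" and \<tau>: "\<tau> > 0" and x: "x \<ge> 0"
  shows "IG_shifted_moment c \<gamma> \<tau> N x > 0"
proof -
  have "IG_shifted_moment c \<gamma> \<tau> N x = IG_moment c \<gamma> N \<tau>
      + (\<Sum>k=Suc 0..N. real (N choose k) * IG_moment c \<gamma> (N - k) \<tau> * x ^ k)"
    unfolding IG_shifted_moment_def by (subst sum.atLeast_Suc_atMost) auto
  moreover have "(\<Sum>k=Suc 0..N. real (N choose k) * IG_moment c \<gamma> (N - k) \<tau> * x ^ k) \<ge> 0"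
    using IG_moment_pos[OF c \<gamma> \<tau>] x by (intro sum_nonneg mult_nonneg_nonneg) (auto intro: less_imp_le)
  ultimately show ?thesis using IG_moment_pos[OF c \<gamma> \<tau>, of N] by linarith
qed

lemma IG_shifted_moment_measurable[measurable]: "IG_shifted_moment c \<gamma> \<tau> N \<in> borel_measurable borel"
  unfolding IG_shifted_moment_def by measurable

lemma nn_integral_shifted_power_q_IG:
  assumes c: "c > 0" and \<gamma>: "\<gamma> > 0" and \<tau>: "\<tau> > 0" and x: "x \<ge> 0"
  shows "(\<integral>\<^sup>+ w. ennreal (q_IG c \<gamma> \<tau> w * (x + w) ^ N) \<partial>lborel) = ennreal (IG_shifted_moment c \<gamma> \<tau> N x)"
proof -
  let ?q = "q_IG c \<gamma> \<tau>"
  let ?a = "\<lambda>k. real (N choose k) * x ^ k"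
  have a: "?a k \<ge> 0" for k using x by simp
  have "(\<integral>\<^sup>+ w. ennreal (?q w * (x + w) ^ N) \<partial>lborel)
      = (\<integral>\<^sup>+ w. (\<Sum>k=0..N. ennreal (?a k) * ennreal (w ^ (N - k) * ?q w)) \<partial>lborel)"
  proof (intro nn_integral_cong)
    fix w :: real
    have "?q w * (x + w) ^ N = (\<Sum>k=0..N. ?a k * (w ^ (N - k) * ?q w))"
      unfolding binomial_ring atLeast0AtMost sum_distrib_left by (intro sum.cong) (auto simp: algebra_simps)
    then show "ennreal (?q w * (x + w) ^ N) = (\<Sum>k=0..N. ennreal (?a k) * ennreal (w ^ (N - k) * ?q w))"
      using a power_mult_q_IG_nonneg[OF c \<gamma> \<tau>]
      by (simp add: sum_ennreal[symmetric] ennreal_mult)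
  qed
  also have "\<dots> = (\<Sum>k=0..N. ennreal (?a k) * ennreal (IG_moment c \<gamma> (N - k) \<tau>))"
    by (simp add: nn_integral_sum nn_integral_cmult nn_integral_power_q_IG[OF c \<gamma> \<tau>])
  also have "\<dots> = (\<Sum>k=0..N. ennreal (?a k * IG_moment c \<gamma> (N - k) \<tau>))"
    using a IG_moment_pos[OF c \<gamma> \<tau>] by (simp add: ennreal_mult less_imp_le)
  also have "\<dots> = ennreal (\<Sum>k=0..N. ?a k * IG_moment c \<gamma> (N - k) \<tau>)"
    using x IG_moment_pos[OF c \<gamma> \<tau>] by (intro sum_ennreal mult_nonneg_nonneg) (auto intro: less_imp_le)
  also have "(\<Sum>k=0..N. ?a k * IG_moment c \<gamma> (N - k) \<tau>) = IG_shifted_moment c \<gamma> \<tau> N x"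
    unfolding IG_shifted_moment_def by (simp add: mult_ac)
  finally show ?thesis .
qed

text \<open>Unnormalised density at \<open>y\<close> of the terminal value given the value \<open>x\<close> at time \<open>T - \<tau>\<close>.\<close>
definition bridge_kernel :: "real \<Rightarrow> real \<Rightarrow> real \<Rightarrow> (real \<Rightarrow> real) \<Rightarrow> real \<Rightarrow> real \<Rightarrow> real" where
  "bridge_kernel c T \<tau> p x y = stable_half_density c \<tau> (y - x) / stable_half_density c T y * p y"

lemma bridge_kernel_measurable[measurable]:
  "p \<in> borel_measurable borel \<Longrightarrow> bridge_kernel c T \<tau> p x \<in> borel_measurable borel"
  unfolding bridge_kernel_def by measurable

lemma bridge_kernel_nonpos_eq_0: "y \<le> 0 \<Longrightarrow> bridge_kernel c T \<tau> p x y = 0"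
  unfolding bridge_kernel_def stable_half_density_def by simp

lemma bridge_kernel_nonneg:
  "c \<ge> 0 \<Longrightarrow> T \<ge> 0 \<Longrightarrow> \<tau> \<ge> 0 \<Longrightarrow> (\<And>y. p y \<ge> 0) \<Longrightarrow> bridge_kernel c T \<tau> p x y \<ge> 0"
  unfolding bridge_kernel_def by (simp add: stable_half_density_nonneg)

lemma ennreal_bridge_kernel_mult:
  assumes "c \<ge> 0" "T \<ge> 0" "\<tau> \<ge> 0" "\<And>y. p y \<ge> 0"
  shows "ennreal (bridge_kernel c T \<tau> p x y) * ennreal y = ennreal (bridge_kernel c T \<tau> p x y * y)"
  using bridge_kernel_nonneg[OF assms] by (cases "y > 0") (auto simp: ennreal_mult bridge_kernel_nonpos_eq_0)

definition GIG_bridge_factor :: "real \<Rightarrow> real \<Rightarrow> real \<Rightarrow> real \<Rightarrow> nat \<Rightarrow> real \<Rightarrow> real" where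
  "GIG_bridge_factor c \<gamma> T \<tau> n x =
     GIG_norm (real n - 1/2) (c * T) \<gamma> * \<tau> * exp (- (\<gamma>^2 * x / 2)) / (T * GIG_norm (-1/2) (c * \<tau>) \<gamma>)"

lemma GIG_bridge_factor_nonneg:
  "c > 0 \<Longrightarrow> \<gamma> > 0 \<Longrightarrow> T > 0 \<Longrightarrow> \<tau> > 0 \<Longrightarrow> GIG_bridge_factor c \<gamma> T \<tau> n x \<ge> 0"
  unfolding GIG_bridge_factor_def
  using GIG_norm_nonneg[of \<gamma> "c * T"] GIG_norm_neg_half_pos[of \<gamma> "c * \<tau>"] by simp

lemma bridge_kernel_GIG_eq:
  fixes n :: nat
  assumes c: "c > 0" and \<gamma>: "\<gamma> > 0" and T: "T > 0" and \<tau>: "\<tau> > 0" and x: "x \<ge> 0"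
  shows "bridge_kernel c T \<tau> (f_GIG (real n - 1/2) (c * T) \<gamma>) x y
       = GIG_bridge_factor c \<gamma> T \<tau> n x * q_IG c \<gamma> \<tau> (y - x) * y ^ n"
proof (cases "y - x > 0")
  case False
  then show ?thesis by (simp add: bridge_kernel_def stable_half_density_def q_IG_eq)
next
  case True
  define w where "w = y - x"
  have w: "w > 0" and y: "y > 0" using True x by (auto simp: w_def)
  define G where "G = GIG_norm (real n - 1/2) (c * T) \<gamma>"
  define H where "H = GIG_norm (-1/2) (c * \<tau>) \<gamma>"
  have H: "H > 0" unfolding H_def using GIG_norm_neg_half_pos c \<gamma> \<tau> by simp
  have y_powr: "y powr (real n - 1/2 - 1) = y ^ n / y powr (3/2)"
    using y by (simp add: powr_diff powr_realpow)
  have exp_y: "exp (- (1/2) * ((c*T)^2 / y + \<gamma>^2 * y)) = exp (- (c^2 * T^2) / (2 * y)) * exp (- (\<gamma>^2 * y / 2))"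
    unfolding exp_add[symmetric] using y by (intro arg_cong[where f=exp]) (simp add: field_simps power_mult_distrib)
  have exp_w: "exp (- ((c*\<tau>)^2/2 / w + \<gamma>^2/2 * w)) = exp (- (c^2 * \<tau>^2) / (2 * w)) * exp (- (\<gamma>^2 * w / 2))"
    unfolding exp_add[symmetric] using w by (intro arg_cong[where f=exp]) (simp add: field_simps power_mult_distrib)
  have exp_split: "exp (- (\<gamma>^2 * y / 2)) = exp (- (\<gamma>^2 * x / 2)) * exp (- (\<gamma>^2 * w / 2))"
    unfolding exp_add[symmetric] w_def by (intro arg_cong[where f=exp]) (simp add: field_simps)
  have "bridge_kernel c T \<tau> (f_GIG (real n - 1/2) (c * T) \<gamma>) x y
     = (c * \<tau> / (sqrt (2 * pi) * w powr (3/2)) * exp (- (c^2 * \<tau>^2) / (2 * w)))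
       / (c * T / (sqrt (2 * pi) * y powr (3/2)) * exp (- (c^2 * T^2) / (2 * y)))
       * (G * (y ^ n / y powr (3/2)) * (exp (- (c^2 * T^2) / (2 * y)) * exp (- (\<gamma>^2 * y / 2))))"
    using w y unfolding bridge_kernel_def stable_half_density_def f_GIG_eq G_def
    by (simp only: w_def[symmetric] y_powr exp_y if_True)
  also have "\<dots> = GIG_bridge_factor c \<gamma> T \<tau> n x * (H * (w powr (-3/2) * exp (- ((c*\<tau>)^2/2 / w + \<gamma>^2/2 * w)))) * y ^ n"
    using c T w y H unfolding GIG_bridge_factor_def G_def[symmetric] H_def[symmetric] exp_w exp_split
    by (simp add: powr_minus_divide divide_simps)
  also have "\<dots> = GIG_bridge_factor c \<gamma> T \<tau> n x * q_IG c \<gamma> \<tau> (y - x) * y ^ n"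
    using w unfolding q_IG_eq H_def w_def by simp
  finally show ?thesis .
qed

lemma nn_integral_bridge_kernel_GIG_power:
  fixes n j :: nat
  assumes c: "c > 0" and \<gamma>: "\<gamma> > 0" and T: "T > 0" and \<tau>: "\<tau> > 0" and x: "x \<ge> 0"
  shows "(\<integral>\<^sup>+ y. ennreal (bridge_kernel c T \<tau> (f_GIG (real n - 1/2) (c * T) \<gamma>) x y * y ^ j) \<partial>lborel)
       = ennreal (GIG_bridge_factor c \<gamma> T \<tau> n x * IG_shifted_moment c \<gamma> \<tau> (n + j) x)"
proof -
  let ?q = "q_IG c \<gamma> \<tau>"
  define K where "K = GIG_bridge_factor c \<gamma> T \<tau> n x"
  have K: "K \<ge> 0" unfolding K_def using c \<gamma> T \<tau> by (rule GIG_bridge_factor_nonneg)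
  have kernel: "bridge_kernel c T \<tau> (f_GIG (real n - 1/2) (c * T) \<gamma>) x y = K * ?q (y - x) * y ^ n" for y
    unfolding K_def by (rule bridge_kernel_GIG_eq[OF c \<gamma> T \<tau> x])
  have "(\<integral>\<^sup>+ y. ennreal (bridge_kernel c T \<tau> (f_GIG (real n - 1/2) (c * T) \<gamma>) x y * y ^ j) \<partial>lborel)
      = (\<integral>\<^sup>+ y. ennreal K * ennreal (?q (y - x) * y ^ (n + j)) \<partial>lborel)"
    unfolding kernel using K by (simp add: ennreal_mult' power_add mult_ac)
  also have "\<dots> = ennreal K * (\<integral>\<^sup>+ w. ennreal (?q w * (x + w) ^ (n + j)) \<partial>lborel)"
    using nn_integral_real_affine[of "\<lambda>y. ennreal (?q (y - x) * y ^ (n + j))" 1 x]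
    by (simp add: nn_integral_cmult)
  also have "\<dots> = ennreal (K * IG_shifted_moment c \<gamma> \<tau> (n + j) x)"
    using K by (simp add: nn_integral_shifted_power_q_IG[OF c \<gamma> \<tau> x] ennreal_mult')
  finally show ?thesis unfolding K_def .
qed

text \<open>The best estimate \<open>U\<^sub>t\<^sub>T\<close> of the paper, as a function of \<open>\<tau> = T - t\<close> and \<open>x = \<xi>\<^sub>t\<^sub>T\<close>.\<close>
definition GIG_bridge_mean :: "real \<Rightarrow> real \<Rightarrow> real \<Rightarrow> nat \<Rightarrow> real \<Rightarrow> real" where
  "GIG_bridge_mean c \<gamma> \<tau> n x = IG_shifted_moment c \<gamma> \<tau> (n + 1) x / IG_shifted_moment c \<gamma> \<tau> n x"

lemma GIG_bridge_mean_measurable[measurable]: "GIG_bridge_mean c \<gamma> \<tau> n \<in> borel_measurable borel"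
  unfolding GIG_bridge_mean_def by measurable

lemma GIG_bridge_mean_pos: "c > 0 \<Longrightarrow> \<gamma> > 0 \<Longrightarrow> \<tau> > 0 \<Longrightarrow> x \<ge> 0 \<Longrightarrow> GIG_bridge_mean c \<gamma> \<tau> n x > 0"
  unfolding GIG_bridge_mean_def by (simp add: IG_shifted_moment_pos)

lemma nn_integral_bridge_kernel_GIG_mean:
  fixes n :: nat
  assumes c: "c > 0" and \<gamma>: "\<gamma> > 0" and T: "T > 0" and \<tau>: "\<tau> > 0" and x: "x \<ge> 0"
  shows "(\<integral>\<^sup>+ y. ennreal (bridge_kernel c T \<tau> (f_GIG (real n - 1/2) (c * T) \<gamma>) x y * y) \<partial>lborel)
       = ennreal (GIG_bridge_mean c \<gamma> \<tau> n x)
         * (\<integral>\<^sup>+ y. ennreal (bridge_kernel c T \<tau> (f_GIG (real n - 1/2) (c * T) \<gamma>) x y) \<partial>lborel)"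
proof -
  define K where "K = GIG_bridge_factor c \<gamma> T \<tau> n x"
  define S where "S = IG_shifted_moment c \<gamma> \<tau>"
  have K: "K \<ge> 0" unfolding K_def using c \<gamma> T \<tau> by (rule GIG_bridge_factor_nonneg)
  have S: "S n x > 0" "S (n + 1) x > 0" unfolding S_def using IG_shifted_moment_pos[OF c \<gamma> \<tau> x] by auto
  have "ennreal (K * S (n + 1) x) = ennreal (S (n + 1) x / S n x) * ennreal (K * S n x)"
    using S K by (simp add: ennreal_mult[symmetric])
  then show ?thesis
    using nn_integral_bridge_kernel_GIG_power[OF c \<gamma> T \<tau> x, of n 1]
      nn_integral_bridge_kernel_GIG_power[OF c \<gamma> T \<tau> x, of n 0]
    by (simp add: K_def S_def GIG_bridge_mean_def)
qed

section \<open>Finite-dimensional distributions of the bridge\<close>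

definition strict_partition :: "real \<Rightarrow> nat \<Rightarrow> (nat \<Rightarrow> real) \<Rightarrow> bool" where
  "strict_partition T m s \<longleftrightarrow> s 0 = 0 \<and> s (m + 1) = T \<and> (\<forall>i\<in>{1..m+1}. s (i - 1) < s i)"

lemma strict_partition_Suc_less:
  assumes "strict_partition T m s" "i \<le> m"
  shows "s i < s (Suc i)"
proof -
  have "Suc i \<in> {1..m+1}" using assms(2) by simp
  then have "s (Suc i - 1) < s (Suc i)" using assms(1) unfolding strict_partition_def by blast
  then show ?thesis by simp
qed

lemma strict_partition_mono:
  assumes s: "strict_partition T m s" and "i \<le> j" "j \<le> m + 1"
  shows "s i \<le> s j"
  using assms(2,3)
proof (induction j)
  case (Suc j)
  show ?case
  proof (cases "i = Suc j")
    case False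
    then have "s i \<le> s j" using Suc by auto
    also have "s j < s (Suc j)" using strict_partition_Suc_less[OF s] Suc.prems by simp
    finally show ?thesis by simp
  qed simp
qed simp

lemma strict_partition_range:
  "strict_partition T m s \<Longrightarrow> i \<le> m + 1 \<Longrightarrow> s i \<in> {0..T}"
  using strict_partition_mono[of T m s 0 i] strict_partition_mono[of T m s i "m + 1"]
  by (auto simp: strict_partition_def)

lemma strict_partition_pos: "strict_partition T m s \<Longrightarrow> T > 0"
  using strict_partition_range[of T m s m] strict_partition_Suc_less[of T m s m]
  by (simp add: strict_partition_def)

definition bridge_fdd_density ::
    "real \<Rightarrow> real \<Rightarrow> (real \<Rightarrow> real) \<Rightarrow> nat \<Rightarrow> (nat \<Rightarrow> real) \<Rightarrow> (nat \<Rightarrow> real) \<Rightarrow> real" where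
  "bridge_fdd_density c T p m s x =
     (\<Prod>i\<in>{1..m+1}. stable_half_density c (s i - s (i - 1)) (x i - (if i = 1 then 0 else x (i - 1))))
     / stable_half_density c T (x (m + 1)) * p (x (m + 1))"

lemma bridge_fdd_density_measurable[measurable]:
  assumes [measurable]: "p \<in> borel_measurable borel"
  shows "bridge_fdd_density c T p m s \<in> borel_measurable (PiM {1..m+1} (\<lambda>_. lborel))"
proof -
  have "(\<lambda>x. stable_half_density c (s i - s (i - 1)) (x i - (if i = 1 then 0 else x (i - 1))))
       \<in> borel_measurable (PiM {1..m+1} (\<lambda>_. lborel))" if "i \<in> {1..m+1}" for i
  proof (cases "i = 1")
    case False
    then have "i - 1 \<in> {1..m+1}" using that by auto
    then show ?thesis using that by measurable
  qed simp
  then show ?thesis unfolding bridge_fdd_density_def by measurable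
qed

lemma nn_integral_stable_half_bridge:
  assumes bridge: "stable_half_bridge M c T p \<xi>"
    and [measurable]: "p \<in> borel_measurable borel"
    and s: "strict_partition T m s"
    and [measurable]: "\<Phi> \<in> borel_measurable (PiM {1..m+1} (\<lambda>_. lborel))"
  shows "(\<integral>\<^sup>+ \<omega>. \<Phi> (\<lambda>i\<in>{1..m+1}. \<xi> (s i) \<omega>) \<partial>M)
       = (\<integral>\<^sup>+ x. ennreal (bridge_fdd_density c T p m s x) * \<Phi> x \<partial>PiM {1..m+1} (\<lambda>_. lborel))"
proof -
  have "\<xi> (s i) \<in> borel_measurable M" if "i \<in> {1..m+1}" for i
    using bridge strict_partition_range[OF s, of i] that by (auto simp: stable_half_bridge_def)
  then have fdd: "(\<lambda>\<omega>. \<lambda>i\<in>{1..m+1}. \<xi> (s i) \<omega>) \<in> measurable M (PiM {1..m+1} (\<lambda>_. lborel))"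
    by (intro measurable_restrict) auto
  have law: "distr M (PiM {1..m+1} (\<lambda>_. lborel)) (\<lambda>\<omega>. \<lambda>i\<in>{1..m+1}. \<xi> (s i) \<omega>) =
        density (PiM {1..m+1} (\<lambda>_. lborel)) (\<lambda>x. ennreal (bridge_fdd_density c T p m s x))"
    using bridge s unfolding stable_half_bridge_def strict_partition_def bridge_fdd_density_def by blast
  have "(\<integral>\<^sup>+ \<omega>. \<Phi> (\<lambda>i\<in>{1..m+1}. \<xi> (s i) \<omega>) \<partial>M)
      = (\<integral>\<^sup>+ x. \<Phi> x \<partial>distr M (PiM {1..m+1} (\<lambda>_. lborel)) (\<lambda>\<omega>. \<lambda>i\<in>{1..m+1}. \<xi> (s i) \<omega>))"
    by (rule nn_integral_distr[symmetric, OF fdd]) measurable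
  also have "\<dots> = (\<integral>\<^sup>+ x. ennreal (bridge_fdd_density c T p m s x) * \<Phi> x \<partial>PiM {1..m+1} (\<lambda>_. lborel))"
    unfolding law by (rule nn_integral_density) measurable
  finally show ?thesis .
qed

lemma prod_stable_half_density_neq_0_imp_pos:
  fixes x d :: "nat \<Rightarrow> real" and i m :: nat
  assumes prod: "(\<Prod>i\<in>{1..m}. stable_half_density c (d i) (x i - (if i = 1 then 0 else x (i - 1)))) \<noteq> 0"
  shows "1 \<le> i \<Longrightarrow> i \<le> m \<Longrightarrow> x i > 0"
proof (induction i)
  case (Suc i)
  define F where "F j = stable_half_density c (d j) (x j - (if j = 1 then 0 else x (j - 1)))" for j
  have "prod F {1..m} \<noteq> 0" using prod unfolding F_def .
  then have "F (Suc i) \<noteq> 0" using Suc.prems by (auto simp: prod_zero_iff)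
  then have increment: "x (Suc i) > (if Suc i = 1 then 0 else x i)"
    unfolding F_def stable_half_density_def by (simp split: if_splits)
  show ?case
  proof (cases "i = 0")
    case False
    then have "x i > 0" using Suc by simp
    then show ?thesis using increment False by simp
  qed (use increment in simp)
qed simp

lemma bridge_fdd_density_upd_last:
  assumes "m \<ge> 1"
  shows "bridge_fdd_density c T p m s (x(m+1 := y)) =
     (\<Prod>i\<in>{1..m}. stable_half_density c (s i - s (i - 1)) (x i - (if i = 1 then 0 else x (i - 1))))
     * bridge_kernel c T (s (m + 1) - s m) p (x m) y"
proof -
  have prod: "(\<Prod>i\<in>{1..m}. stable_half_density c (s i - s (i - 1))
              ((x(m+1 := y)) i - (if i = 1 then 0 else (x(m+1 := y)) (i - 1))))
       = (\<Prod>i\<in>{1..m}. stable_half_density c (s i - s (i - 1)) (x i - (if i = 1 then 0 else x (i - 1))))"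
    by (intro prod.cong) auto
  have "bridge_fdd_density c T p m s (x(m+1 := y)) =
     (\<Prod>i\<in>{1..m}. stable_half_density c (s i - s (i - 1))
              ((x(m+1 := y)) i - (if i = 1 then 0 else (x(m+1 := y)) (i - 1))))
     * stable_half_density c (s (m+1) - s m) (y - x m) / stable_half_density c T y * p y"
    unfolding bridge_fdd_density_def using assms by simp
  then show ?thesis unfolding prod bridge_kernel_def by simp
qed

lemma bridge_fdd_density_upd_last_measurable:
  assumes "m \<ge> 1" and [measurable]: "p \<in> borel_measurable borel"
  shows "(\<lambda>y. bridge_fdd_density c T p m s (x(m+1 := y))) \<in> borel_measurable borel"
  unfolding bridge_fdd_density_upd_last[OF assms(1)] by measurable

text \<open>The bridge puts no mass on \<open>{x \<le> 0}\<close> at positive times, whatever its terminal law: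
  at \<open>t = T\<close> the fdd density reads \<open>f\<^sub>T(x) / f\<^sub>T(x) * p(x)\<close>, which vanishes for \<open>x \<le> 0\<close> because
  division by zero yields zero.\<close>
lemma stable_half_bridge_AE_pos:
  assumes bridge: "stable_half_bridge M c T p \<xi>"
    and [measurable]: "p \<in> borel_measurable borel"
    and t: "0 < t" "t \<le> T"
  shows "AE \<omega> in M. \<xi> t \<omega> > 0"
proof -
  define m :: nat where "m = (if t < T then 1 else 0)"
  define s :: "nat \<Rightarrow> real" where "s = (\<lambda>i. if i = 0 then 0 else if i = 1 then t else T)"
  have s: "strict_partition T m s" using t unfolding strict_partition_def m_def s_def by auto
  have [measurable]: "\<xi> t \<in> borel_measurable M" using bridge t by (auto simp: stable_half_bridge_def)
  have "(\<integral>\<^sup>+ \<omega>. indicator {..0} (\<xi> t \<omega>) \<partial>M)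
      = (\<integral>\<^sup>+ \<omega>. (\<lambda>x. indicator {..0} (x (1::nat))) (\<lambda>i\<in>{1..m+1}. \<xi> (s i) \<omega>) \<partial>M)"
    by (simp add: s_def)
  also have "\<dots> = (\<integral>\<^sup>+ x. ennreal (bridge_fdd_density c T p m s x) * indicator {..0} (x 1)
                    \<partial>PiM {1..m+1} (\<lambda>_. lborel))"
    by (rule nn_integral_stable_half_bridge[OF bridge _ s]) measurable
  also have "\<dots> = (\<integral>\<^sup>+ x. 0 \<partial>PiM {1..m+1} (\<lambda>_. lborel :: real measure))"
  proof (intro nn_integral_cong)
    fix x :: "nat \<Rightarrow> real"
    show "ennreal (bridge_fdd_density c T p m s x) * indicator {..0} (x 1) = 0"
    proof (cases "(\<Prod>i\<in>{1..m+1}. stable_half_density c (s i - s (i - 1)) (x i - (if i = 1 then 0 else x (i - 1)))) = 0")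
      case True
      then show ?thesis unfolding bridge_fdd_density_def True by simp
    next
      case False
      then have "x 1 > 0" by (rule prod_stable_half_density_neq_0_imp_pos) simp_all
      then show ?thesis by simp
    qed
  qed
  finally have "(\<integral>\<^sup>+ \<omega>. indicator {..0} (\<xi> t \<omega>) \<partial>M) = 0" by simp
  then have "AE \<omega> in M. indicator {..0} (\<xi> t \<omega>) = (0::ennreal)"
    by (subst nn_integral_0_iff_AE[symmetric]) auto
  then show ?thesis by (auto simp: indicator_def not_le)
qed

lemma stable_half_bridge_AE_nonneg:
  assumes bridge: "stable_half_bridge M c T p \<xi>"
    and "p \<in> borel_measurable borel"
    and t: "0 \<le> t" "t \<le> T"
  shows "AE \<omega> in M. \<xi> t \<omega> \<ge> 0"
proof (cases "t = 0")
  case True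
  then show ?thesis using bridge by (auto simp: stable_half_bridge_def elim: AE_mp)
next
  case False
  then have "AE \<omega> in M. \<xi> t \<omega> > 0" using stable_half_bridge_AE_pos[OF assms(1,2)] t by simp
  then show ?thesis by eventually_elim simp
qed

section \<open>The conditional mean on cylinder sets\<close>

interpretation lborel_product: product_sigma_finite "\<lambda>_::nat. lborel :: real measure"
  by standard

lemma nn_integral_PiM_last:
  fixes m :: nat
  assumes "\<Phi> \<in> borel_measurable (PiM {1..m+1} (\<lambda>_. lborel :: real measure))"
  shows "(\<integral>\<^sup>+ x. \<Phi> x \<partial>PiM {1..m+1} (\<lambda>_. lborel))
       = (\<integral>\<^sup>+ x. (\<integral>\<^sup>+ y. \<Phi> (x(m+1 := y)) \<partial>lborel) \<partial>PiM {1..m} (\<lambda>_. lborel))"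
proof -
  have insert: "{1..m+1} = insert (m+1) {1..m}" by auto
  show ?thesis
    using assms unfolding insert by (intro lborel_product.product_nn_integral_insert) auto
qed

lemma nn_integral_bridge_fdd_density_GIG_last_mean:
  fixes n :: nat
  assumes c: "c > 0" and \<gamma>: "\<gamma> > 0" and s: "strict_partition T m s" and m: "m \<ge> 1"
  defines "\<rho> \<equiv> bridge_fdd_density c T (f_GIG (real n - 1/2) (c * T) \<gamma>) m s"
  shows "(\<integral>\<^sup>+ y. ennreal (\<rho> (x(m+1 := y))) * ennreal y \<partial>lborel)
       = ennreal (GIG_bridge_mean c \<gamma> (T - s m) n (x m)) * (\<integral>\<^sup>+ y. ennreal (\<rho> (x(m+1 := y))) \<partial>lborel)"
proof -
  let ?p = "f_GIG (real n - 1/2) (c * T) \<gamma>"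
  define G where "G = (\<Prod>i\<in>{1..m}. stable_half_density c (s i - s (i - 1)) (x i - (if i = 1 then 0 else x (i - 1))))"
  have s_last: "s (m + 1) = T" using s by (simp add: strict_partition_def)
  have s_m: "s m < T" using strict_partition_Suc_less[OF s, of m] s_last by simp
  have T: "T > 0" using strict_partition_pos[OF s] .
  let ?k = "bridge_kernel c T (T - s m) ?p (x m)"
  have \<rho>: "\<rho> (x(m+1 := y)) = G * ?k y" for y
    unfolding \<rho>_def G_def bridge_fdd_density_upd_last[OF m] s_last ..
  show ?thesis
  proof (cases "G = 0")
    case True
    then show ?thesis unfolding \<rho> by simp
  next
    case False
    have "s (i - 1) \<le> s i" if "i \<in> {1..m}" for i
      using that by (intro strict_partition_mono[OF s]) auto
    then have G: "G \<ge> 0" unfolding G_def using c by (intro prod_nonneg stable_half_density_nonneg) auto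
    have x_m: "x m > 0"
      using False m unfolding G_def by (intro prod_stable_half_density_neq_0_imp_pos) auto
    have k_y: "ennreal (?k y) * ennreal y = ennreal (?k y * y)" for y
      using c T s_m f_GIG_nonneg[OF \<gamma>, of "c * T"] by (intro ennreal_bridge_kernel_mult) auto
    have "(\<integral>\<^sup>+ y. ennreal (\<rho> (x(m+1 := y))) * ennreal y \<partial>lborel)
        = (\<integral>\<^sup>+ y. ennreal G * ennreal (?k y * y) \<partial>lborel)"
      unfolding \<rho> ennreal_mult'[OF G] by (simp add: mult.assoc k_y)
    also have "\<dots> = ennreal G * (\<integral>\<^sup>+ y. ennreal (?k y * y) \<partial>lborel)"
      by (rule nn_integral_cmult) measurable
    also have "\<dots> = ennreal G * (ennreal (GIG_bridge_mean c \<gamma> (T - s m) n (x m)) * (\<integral>\<^sup>+ y. ennreal (?k y) \<partial>lborel))"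
      using nn_integral_bridge_kernel_GIG_mean[OF c \<gamma> T _ less_imp_le[OF x_m], of "T - s m" n] s_m by simp
    also have "\<dots> = ennreal (GIG_bridge_mean c \<gamma> (T - s m) n (x m)) * (\<integral>\<^sup>+ y. ennreal G * ennreal (?k y) \<partial>lborel)"
      by (subst nn_integral_cmult) (measurable, simp add: ac_simps)
    also have "(\<integral>\<^sup>+ y. ennreal G * ennreal (?k y) \<partial>lborel) = (\<integral>\<^sup>+ y. ennreal (\<rho> (x(m+1 := y))) \<partial>lborel)"
      unfolding \<rho> ennreal_mult'[OF G] ..
    finally show ?thesis .
  qed
qed

lemma nn_integral_bridge_fdd_density_GIG_last_cmult:
  fixes n :: nat and a :: ennreal
  assumes c: "c > 0" and \<gamma>: "\<gamma> > 0" and s: "strict_partition T m s" and m: "m \<ge> 1"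
  defines "\<rho> \<equiv> bridge_fdd_density c T (f_GIG (real n - 1/2) (c * T) \<gamma>) m s"
  shows "(\<integral>\<^sup>+ y. ennreal (\<rho> (x(m+1 := y))) * (a * ennreal y) \<partial>lborel)
       = (\<integral>\<^sup>+ y. ennreal (\<rho> (x(m+1 := y))) * (a * ennreal (GIG_bridge_mean c \<gamma> (T - s m) n (x m))) \<partial>lborel)"
proof -
  have [measurable]: "(\<lambda>y. \<rho> (x(m+1 := y))) \<in> borel_measurable borel"
    unfolding \<rho>_def using m by (intro bridge_fdd_density_upd_last_measurable) auto
  have "(\<integral>\<^sup>+ y. ennreal (\<rho> (x(m+1 := y))) * (a * ennreal y) \<partial>lborel)
      = a * (\<integral>\<^sup>+ y. ennreal (\<rho> (x(m+1 := y))) * ennreal y \<partial>lborel)"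
    by (subst nn_integral_cmult[symmetric]) (measurable, simp add: ac_simps)
  also have "\<dots> = (a * ennreal (GIG_bridge_mean c \<gamma> (T - s m) n (x m))) * (\<integral>\<^sup>+ y. ennreal (\<rho> (x(m+1 := y))) \<partial>lborel)"
    unfolding \<rho>_def nn_integral_bridge_fdd_density_GIG_last_mean[OF c \<gamma> s m] by (simp only: mult.assoc)
  also have "\<dots> = (\<integral>\<^sup>+ y. ennreal (\<rho> (x(m+1 := y))) * (a * ennreal (GIG_bridge_mean c \<gamma> (T - s m) n (x m))) \<partial>lborel)"
    by (subst nn_integral_cmult[symmetric]) (measurable, simp add: ac_simps)
  finally show ?thesis .
qed

lemma stable_half_bridge_GIG_partition:
  fixes n :: nat and h :: "(nat \<Rightarrow> real) \<Rightarrow> ennreal"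
  assumes c: "c > 0" and \<gamma>: "\<gamma> > 0"
    and bridge: "stable_half_bridge M c T (f_GIG (real n - 1/2) (c * T) \<gamma>) \<xi>"
    and s: "strict_partition T m s" and m: "m \<ge> 1"
    and h[measurable]: "h \<in> borel_measurable (PiM {1..m} (\<lambda>_. lborel))"
  shows "(\<integral>\<^sup>+ \<omega>. h (\<lambda>i\<in>{1..m}. \<xi> (s i) \<omega>) * ennreal (\<xi> T \<omega>) \<partial>M)
       = (\<integral>\<^sup>+ \<omega>. h (\<lambda>i\<in>{1..m}. \<xi> (s i) \<omega>) * ennreal (GIG_bridge_mean c \<gamma> (T - s m) n (\<xi> (s m) \<omega>)) \<partial>M)"
proof -
  let ?p = "f_GIG (real n - 1/2) (c * T) \<gamma>"
  let ?\<rho> = "bridge_fdd_density c T ?p m s"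
  let ?U = "GIG_bridge_mean c \<gamma> (T - s m) n"
  let ?P = "PiM {1..m+1} (\<lambda>_. lborel :: real measure)"
  define \<Phi>\<^sub>1 where "\<Phi>\<^sub>1 x = h (restrict x {1..m}) * ennreal (x (m + 1))" for x
  define \<Phi>\<^sub>2 where "\<Phi>\<^sub>2 x = h (restrict x {1..m}) * ennreal (?U (x m))" for x
  have last: "m + 1 \<in> {1..m+1}" "m \<in> {1..m+1}" using m by auto
  have [measurable]: "(\<lambda>x. h (restrict x {1..m})) \<in> borel_measurable ?P"
    by (rule measurable_compose[OF measurable_restrict_subset h]) auto
  have \<Phi>\<^sub>1[measurable]: "\<Phi>\<^sub>1 \<in> borel_measurable ?P" unfolding \<Phi>\<^sub>1_def using last by measurable
  have \<Phi>\<^sub>2[measurable]: "\<Phi>\<^sub>2 \<in> borel_measurable ?P" unfolding \<Phi>\<^sub>2_def using last by measurable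
  have inner: "(\<integral>\<^sup>+ y. ennreal (?\<rho> (x(m+1 := y))) * \<Phi>\<^sub>1 (x(m+1 := y)) \<partial>lborel)
      = (\<integral>\<^sup>+ y. ennreal (?\<rho> (x(m+1 := y))) * \<Phi>\<^sub>2 (x(m+1 := y)) \<partial>lborel)" for x
  proof -
    have "restrict (x(m+1 := y)) {1..m} = restrict x {1..m}" for y by auto
    then have "\<Phi>\<^sub>1 (x(m+1 := y)) = h (restrict x {1..m}) * ennreal y"
      "\<Phi>\<^sub>2 (x(m+1 := y)) = h (restrict x {1..m}) * ennreal (?U (x m))" for y
      using m by (simp_all add: \<Phi>\<^sub>1_def \<Phi>\<^sub>2_def)
    then show ?thesis by (simp only: nn_integral_bridge_fdd_density_GIG_last_cmult[OF c \<gamma> s m])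
  qed
  have "(\<integral>\<^sup>+ \<omega>. h (\<lambda>i\<in>{1..m}. \<xi> (s i) \<omega>) * ennreal (\<xi> T \<omega>) \<partial>M)
      = (\<integral>\<^sup>+ \<omega>. \<Phi>\<^sub>1 (\<lambda>i\<in>{1..m+1}. \<xi> (s i) \<omega>) \<partial>M)"
    using s by (auto simp: \<Phi>\<^sub>1_def strict_partition_def intro!: nn_integral_cong arg_cong[where f=h])
  also have "\<dots> = (\<integral>\<^sup>+ x. ennreal (?\<rho> x) * \<Phi>\<^sub>1 x \<partial>?P)"
    by (rule nn_integral_stable_half_bridge[OF bridge _ s \<Phi>\<^sub>1]) measurable
  also have "\<dots> = (\<integral>\<^sup>+ x. (\<integral>\<^sup>+ y. ennreal (?\<rho> (x(m+1 := y))) * \<Phi>\<^sub>1 (x(m+1 := y)) \<partial>lborel) \<partial>PiM {1..m} (\<lambda>_. lborel))"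
    by (rule nn_integral_PiM_last) measurable
  also have "\<dots> = (\<integral>\<^sup>+ x. ennreal (?\<rho> x) * \<Phi>\<^sub>2 x \<partial>?P)"
    unfolding inner by (rule nn_integral_PiM_last[symmetric]) measurable
  also have "\<dots> = (\<integral>\<^sup>+ \<omega>. \<Phi>\<^sub>2 (\<lambda>i\<in>{1..m+1}. \<xi> (s i) \<omega>) \<partial>M)"
    by (rule nn_integral_stable_half_bridge[symmetric, OF bridge _ s \<Phi>\<^sub>2]) measurable
  also have "\<dots> = (\<integral>\<^sup>+ \<omega>. h (\<lambda>i\<in>{1..m}. \<xi> (s i) \<omega>) * ennreal (?U (\<xi> (s m) \<omega>)) \<partial>M)"
    using m by (auto simp: \<Phi>\<^sub>2_def intro!: nn_integral_cong arg_cong[where f=h])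
  finally show ?thesis .
qed

lemma stable_half_bridge_GIG_terminal_mean:
  fixes n :: nat
  assumes "prob_space M" and c: "c > 0" and \<gamma>: "\<gamma> > 0" and T: "T > 0"
    and bridge: "stable_half_bridge M c T (f_GIG (real n - 1/2) (c * T) \<gamma>) \<xi>"
  shows "(\<integral>\<^sup>+ \<omega>. ennreal (\<xi> T \<omega>) \<partial>M) = ennreal (GIG_bridge_mean c \<gamma> T n 0)"
proof -
  let ?p = "f_GIG (real n - 1/2) (c * T) \<gamma>"
  let ?k = "bridge_kernel c T T ?p 0"
  define s :: "nat \<Rightarrow> real" where "s i = (if i = 0 then 0 else T)" for i
  have s: "strict_partition T 0 s" using T by (simp add: strict_partition_def s_def)
  have one: "{1..0+1::nat} = {1}" by auto
  have terminal: "(\<integral>\<^sup>+ \<omega>. f (\<xi> T \<omega>) \<partial>M) = (\<integral>\<^sup>+ y. ennreal (?k y) * f y \<partial>lborel)"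
    if [measurable]: "f \<in> borel_measurable borel" for f
  proof -
    have "(\<integral>\<^sup>+ \<omega>. f (\<xi> T \<omega>) \<partial>M) = (\<integral>\<^sup>+ \<omega>. (\<lambda>x. f (x 1)) (\<lambda>i\<in>{1..0+1}. \<xi> (s i) \<omega>) \<partial>M)"
      by (simp add: s_def)
    also have "\<dots> = (\<integral>\<^sup>+ x. ennreal (bridge_fdd_density c T ?p 0 s x) * f (x 1) \<partial>PiM {1..0+1} (\<lambda>_. lborel))"
      by (rule nn_integral_stable_half_bridge[OF bridge _ s]) measurable
    also have "\<dots> = (\<integral>\<^sup>+ x. (\<lambda>y. ennreal (?k y) * f y) (x (1::nat)) \<partial>PiM {1} (\<lambda>_. lborel))"
      unfolding one by (intro nn_integral_cong) (simp add: bridge_fdd_density_def bridge_kernel_def s_def)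
    also have "\<dots> = (\<integral>\<^sup>+ y. ennreal (?k y) * f y \<partial>lborel)"
      by (rule lborel_product.product_nn_integral_singleton) measurable
    finally show ?thesis .
  qed
  have "(\<integral>\<^sup>+ y. ennreal (?k y) \<partial>lborel) = 1"
    using terminal[of "\<lambda>_. 1"] prob_space.emeasure_space_1[OF assms(1)] by simp
  moreover have "(\<integral>\<^sup>+ \<omega>. ennreal (\<xi> T \<omega>) \<partial>M) = (\<integral>\<^sup>+ y. ennreal (?k y * y) \<partial>lborel)"
    using c \<gamma> T f_GIG_nonneg[OF \<gamma>, of "c * T"]
    by (simp add: terminal ennreal_bridge_kernel_mult)
  ultimately show ?thesis
    using nn_integral_bridge_kernel_GIG_mean[OF c \<gamma> T T order.refl] by simp
qed

lemma strict_partition_sorted_list: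
  fixes L :: "real list"
  assumes L: "sorted_wrt (<) L" "set L \<subseteq> {0<..<T}" "L \<noteq> []"
  shows "strict_partition T (length L) (\<lambda>i. if i = 0 then 0 else if i \<le> length L then L ! (i - 1) else T)"
    (is "strict_partition T ?m ?s")
  unfolding strict_partition_def
proof (intro conjI ballI)
  show "?s 0 = 0" "?s (?m + 1) = T" by simp_all
  fix i assume i: "i \<in> {1..?m+1}"
  have in_L: "?s k \<in> {0<..<T}" if "k \<in> {1..?m}" for k
  proof -
    have "L ! (k - 1) \<in> set L" using that by (intro nth_mem) auto
    then show ?thesis using that L(2) by auto
  qed
  consider "i = 1" | "i = ?m + 1" "i \<noteq> 1" | "2 \<le> i" "i \<le> ?m" using i by fastforce
  then show "?s (i - 1) < ?s i"
  proof cases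
    case 1
    then show ?thesis using in_L[of 1] L(3) by (simp add: Suc_leI)
  next
    case 2
    then show ?thesis using in_L[of ?m] L(3) by (simp add: Suc_le_eq)
  next
    case 3
    then have "L ! (i - 2) < L ! (i - 1)" using sorted_wrt_nth_less[OF L(1), of "i - 2" "i - 1"] by auto
    moreover have "?s (i - 1) = L ! (i - 2)" "?s i = L ! (i - 1)" using 3 by (auto simp: numeral_2_eq_2)
    ultimately show ?thesis by simp
  qed
qed

lemma strict_partition_through_finite_set:
  fixes J :: "real set"
  assumes J: "finite J" "J \<subseteq> {0<..<T}" "J \<noteq> {}"
  obtains m s where "strict_partition T m s" "m \<ge> 1" "s ` {1..m} = J" "s m = Max J"
proof -
  define L where "L = sorted_list_of_set J"
  define m where "m = length L"
  define s where "s i = (if i = 0 then 0 else if i \<le> m then L ! (i - 1) else T)" for i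
  have L: "sorted_wrt (<) L" "set L = J" "L \<noteq> []" using J by (auto simp: L_def)
  have partition: "strict_partition T m s"
    unfolding s_def m_def using L J(2) by (intro strict_partition_sorted_list) auto
  have m: "m \<ge> 1" using L(3) by (simp add: m_def Suc_leI)
  have in_J: "s i \<in> J" if "i \<in> {1..m}" for i
    using that L(2) nth_mem[of "i - 1" L] unfolding s_def m_def by auto
  have image: "s ` {1..m} = J"
  proof
    show "J \<subseteq> s ` {1..m}"
    proof
      fix j assume "j \<in> J"
      then obtain k where k: "k < m" "L ! k = j" using L(2) by (metis in_set_conv_nth m_def)
      then have "s (k + 1) = j" "k + 1 \<in> {1..m}" unfolding s_def by simp_all
      then show "j \<in> s ` {1..m}" by (metis image_eqI)
    qed
  qed (use in_J in auto)
  have "Max J = s m"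
  proof (rule Max_eqI)
    show "j \<le> s m" if "j \<in> J" for j
      using that strict_partition_mono[OF partition] unfolding image[symmetric] by auto
  qed (use J(1) in_J m in auto)
  then show thesis using that partition m image by simp
qed

lemma stable_half_bridge_GIG_cylinder_pos:
  fixes n :: nat and B :: "real \<Rightarrow> real set"
  assumes c: "c > 0" and \<gamma>: "\<gamma> > 0"
    and bridge: "stable_half_bridge M c T (f_GIG (real n - 1/2) (c * T) \<gamma>) \<xi>"
    and t: "0 < t" "t < T" and J: "finite J" "J \<subseteq> {0<..t}" and B: "\<And>j. B j \<in> sets borel"
  defines "A \<equiv> {\<omega>\<in>space M. \<forall>j\<in>J. \<xi> j \<omega> \<in> B j}"
  shows "(\<integral>\<^sup>+ \<omega>. indicator A \<omega> * ennreal (\<xi> T \<omega>) \<partial>M)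
       = (\<integral>\<^sup>+ \<omega>. indicator A \<omega> * ennreal (GIG_bridge_mean c \<gamma> (T - t) n (\<xi> t \<omega>)) \<partial>M)"
proof -
  obtain m s where s: "strict_partition T m s" and m: "m \<ge> 1"
    and image: "s ` {1..m} = insert t J" and last: "s m = Max (insert t J)"
    by (rule strict_partition_through_finite_set[of "insert t J" T]) (use J t in auto)
  have s_m: "s m = t" unfolding last using J by (intro Max_eqI) auto
  define h :: "(nat \<Rightarrow> real) \<Rightarrow> ennreal"
    where "h x = (if \<forall>i\<in>{1..m}. s i \<in> J \<longrightarrow> x i \<in> B (s i) then 1 else 0)" for x
  have h[measurable]: "h \<in> borel_measurable (PiM {1..m} (\<lambda>_. lborel))"
    unfolding h_def using B by measurable
  have A: "indicator A \<omega> = h (\<lambda>i\<in>{1..m}. \<xi> (s i) \<omega>)" if "\<omega> \<in> space M" for \<omega>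
  proof -
    have "(\<forall>j\<in>J. \<xi> j \<omega> \<in> B j) \<longleftrightarrow> (\<forall>i\<in>{1..m}. s i \<in> J \<longrightarrow> \<xi> (s i) \<omega> \<in> B (s i))"
    proof (intro iffI ballI)
      fix j assume H: "\<forall>i\<in>{1..m}. s i \<in> J \<longrightarrow> \<xi> (s i) \<omega> \<in> B (s i)" and j: "j \<in> J"
      then have "j \<in> s ` {1..m}" unfolding image by simp
      then obtain i where "i \<in> {1..m}" "j = s i" by blast
      then show "\<xi> j \<omega> \<in> B j" using H j by simp
    qed simp
    then show ?thesis using that by (simp add: A_def h_def indicator_def)
  qed
  have "(\<integral>\<^sup>+ \<omega>. indicator A \<omega> * ennreal (\<xi> T \<omega>) \<partial>M)
      = (\<integral>\<^sup>+ \<omega>. h (\<lambda>i\<in>{1..m}. \<xi> (s i) \<omega>) * ennreal (\<xi> T \<omega>) \<partial>M)"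
    by (intro nn_integral_cong) (simp add: A)
  also have "\<dots> = (\<integral>\<^sup>+ \<omega>. h (\<lambda>i\<in>{1..m}. \<xi> (s i) \<omega>) * ennreal (GIG_bridge_mean c \<gamma> (T - t) n (\<xi> t \<omega>)) \<partial>M)"
    using stable_half_bridge_GIG_partition[OF c \<gamma> bridge s m h] s_m by simp
  also have "\<dots> = (\<integral>\<^sup>+ \<omega>. indicator A \<omega> * ennreal (GIG_bridge_mean c \<gamma> (T - t) n (\<xi> t \<omega>)) \<partial>M)"
    by (intro nn_integral_cong) (simp add: A)
  finally show ?thesis .
qed

lemma nn_integral_cylinder_drop_0:
  fixes \<xi> :: "real \<Rightarrow> 'a \<Rightarrow> real" and f :: "'a \<Rightarrow> ennreal"
  assumes \<xi>_0: "AE \<omega> in M. \<xi> 0 \<omega> = 0" and J: "finite J" "\<And>j. j \<in> J \<Longrightarrow> \<xi> j \<in> borel_measurable M"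
    and B: "\<And>j. B j \<in> sets borel" and [measurable]: "f \<in> borel_measurable M"
  shows "(\<integral>\<^sup>+ \<omega>. indicator {\<omega>\<in>space M. \<forall>j\<in>J. \<xi> j \<omega> \<in> B j} \<omega> * f \<omega> \<partial>M)
       = (if 0 \<in> J \<and> 0 \<notin> B 0 then 0 else 1)
         * (\<integral>\<^sup>+ \<omega>. indicator {\<omega>\<in>space M. \<forall>j\<in>J - {0}. \<xi> j \<omega> \<in> B j} \<omega> * f \<omega> \<partial>M)"
proof -
  define A where "A = {\<omega>\<in>space M. \<forall>j\<in>J. \<xi> j \<omega> \<in> B j}"
  define A' where "A' = {\<omega>\<in>space M. \<forall>j\<in>J - {0}. \<xi> j \<omega> \<in> B j}"
  define \<kappa> :: ennreal where "\<kappa> = (if 0 \<in> J \<and> 0 \<notin> B 0 then 0 else 1)"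
  have "{\<omega>\<in>space M. \<xi> j \<omega> \<in> B j} \<in> sets M" if "j \<in> J" for j
    using measurable_sets_Collect[OF J(2)[OF that], of "\<lambda>x. x \<in> B j"] B by simp
  then have [measurable]: "A' \<in> sets M"
    unfolding A'_def using J(1) by (intro sets.sets_Collect_finite_All) auto
  have A_iff: "\<omega> \<in> A \<longleftrightarrow> (0 \<in> J \<longrightarrow> 0 \<in> B 0) \<and> \<omega> \<in> A'" if "\<xi> 0 \<omega> = 0" for \<omega>
    using that unfolding A_def A'_def by auto
  have "AE \<omega> in M. indicator A \<omega> * f \<omega> = \<kappa> * (indicator A' \<omega> * f \<omega>)"
    using \<xi>_0 by eventually_elim (auto simp: A_iff indicator_def \<kappa>_def)
  then have "(\<integral>\<^sup>+ \<omega>. indicator A \<omega> * f \<omega> \<partial>M) = (\<integral>\<^sup>+ \<omega>. \<kappa> * (indicator A' \<omega> * f \<omega>) \<partial>M)"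
    by (rule nn_integral_cong_AE)
  also have "\<dots> = \<kappa> * (\<integral>\<^sup>+ \<omega>. indicator A' \<omega> * f \<omega> \<partial>M)"
    by (rule nn_integral_cmult) measurable
  finally show ?thesis unfolding A_def A'_def \<kappa>_def .
qed

lemma stable_half_bridge_GIG_mean_at_0:
  fixes n :: nat
  assumes M: "prob_space M" and c: "c > 0" and \<gamma>: "\<gamma> > 0" and T: "T > 0"
    and bridge: "stable_half_bridge M c T (f_GIG (real n - 1/2) (c * T) \<gamma>) \<xi>"
  shows "(\<integral>\<^sup>+ \<omega>. ennreal (\<xi> T \<omega>) \<partial>M) = (\<integral>\<^sup>+ \<omega>. ennreal (GIG_bridge_mean c \<gamma> T n (\<xi> 0 \<omega>)) \<partial>M)"
proof -
  have "(\<integral>\<^sup>+ \<omega>. ennreal (\<xi> T \<omega>) \<partial>M) = (\<integral>\<^sup>+ \<omega>. ennreal (GIG_bridge_mean c \<gamma> T n 0) \<partial>M)"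
    using stable_half_bridge_GIG_terminal_mean[OF assms] prob_space.emeasure_space_1[OF M] by simp
  also have "\<dots> = (\<integral>\<^sup>+ \<omega>. ennreal (GIG_bridge_mean c \<gamma> T n (\<xi> 0 \<omega>)) \<partial>M)"
    using bridge by (intro nn_integral_cong_AE) (auto simp: stable_half_bridge_def)
  finally show ?thesis .
qed

lemma stable_half_bridge_GIG_cylinder:
  fixes n :: nat
  assumes M: "prob_space M" and c: "c > 0" and \<gamma>: "\<gamma> > 0"
    and bridge: "stable_half_bridge M c T (f_GIG (real n - 1/2) (c * T) \<gamma>) \<xi>"
    and t: "0 \<le> t" "t < T" and A: "A \<in> cylinder_sets M \<xi> t"
  shows "(\<integral>\<^sup>+ \<omega>. indicator A \<omega> * ennreal (\<xi> T \<omega>) \<partial>M)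
       = (\<integral>\<^sup>+ \<omega>. indicator A \<omega> * ennreal (GIG_bridge_mean c \<gamma> (T - t) n (\<xi> t \<omega>)) \<partial>M)"
proof -
  let ?U = "GIG_bridge_mean c \<gamma> (T - t) n"
  obtain J B where A_eq: "A = {\<omega>\<in>space M. \<forall>j\<in>J. \<xi> j \<omega> \<in> B j}"
    and J: "finite J" "J \<subseteq> {0..t}" and B: "\<And>j. B j \<in> sets borel"
    using A unfolding cylinder_sets_def by blast
  define A' where "A' = {\<omega>\<in>space M. \<forall>j\<in>J - {0}. \<xi> j \<omega> \<in> B j}"
  have \<xi>_meas: "\<xi> s \<in> borel_measurable M" if "s \<in> {0..T}" for s
    using bridge that by (simp add: stable_half_bridge_def)
  have [measurable]: "\<xi> t \<in> borel_measurable M" "\<xi> T \<in> borel_measurable M" using \<xi>_meas t by auto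
  have drop_0: "(\<integral>\<^sup>+ \<omega>. indicator A \<omega> * f \<omega> \<partial>M)
      = (if 0 \<in> J \<and> 0 \<notin> B 0 then 0 else 1) * (\<integral>\<^sup>+ \<omega>. indicator A' \<omega> * f \<omega> \<partial>M)"
    if "f \<in> borel_measurable M" for f
    unfolding A_eq A'_def using bridge J t B \<xi>_meas that
    by (intro nn_integral_cylinder_drop_0) (auto simp: stable_half_bridge_def)
  have "(\<integral>\<^sup>+ \<omega>. indicator A' \<omega> * ennreal (\<xi> T \<omega>) \<partial>M)
      = (\<integral>\<^sup>+ \<omega>. indicator A' \<omega> * ennreal (?U (\<xi> t \<omega>)) \<partial>M)"
  proof (cases "t = 0")
    case True
    then have "A' = space M" using J by (auto simp: A'_def)
    then have "(\<integral>\<^sup>+ \<omega>. indicator A' \<omega> * f \<omega> \<partial>M) = (\<integral>\<^sup>+ \<omega>. f \<omega> \<partial>M)" for f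
      by (intro nn_integral_cong) simp
    then show ?thesis using stable_half_bridge_GIG_mean_at_0[OF M c \<gamma> _ bridge] t True by simp
  next
    case False
    then show ?thesis
      unfolding A'_def using t J B by (intro stable_half_bridge_GIG_cylinder_pos[OF c \<gamma> bridge]) auto
  qed
  then show ?thesis by (simp add: drop_0)
qed

lemma integrable_GIG_bridge_mean_stable_half_bridge:
  fixes n :: nat
  assumes M: "prob_space M" and c: "c > 0" and \<gamma>: "\<gamma> > 0"
    and bridge: "stable_half_bridge M c T (f_GIG (real n - 1/2) (c * T) \<gamma>) \<xi>"
    and t: "0 \<le> t" "t < T"
  shows "integrable M (\<lambda>\<omega>. GIG_bridge_mean c \<gamma> (T - t) n (\<xi> t \<omega>))"
    and "AE \<omega> in M. GIG_bridge_mean c \<gamma> (T - t) n (\<xi> t \<omega>) \<ge> 0"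
proof -
  let ?U = "GIG_bridge_mean c \<gamma> (T - t) n"
  have "AE \<omega> in M. \<xi> t \<omega> \<ge> 0" using stable_half_bridge_AE_nonneg[OF bridge _ t(1)] t by simp
  then show nonneg: "AE \<omega> in M. ?U (\<xi> t \<omega>) \<ge> 0"
  proof eventually_elim
    case (elim \<omega>)
    show ?case using GIG_bridge_mean_pos[OF c \<gamma> _ elim, of "T - t" n] t by simp
  qed
  have [measurable]: "\<xi> t \<in> borel_measurable M" using bridge t by (simp add: stable_half_bridge_def)
  have "(\<integral>\<^sup>+ \<omega>. indicator (space M) \<omega> * f \<omega> \<partial>M) = (\<integral>\<^sup>+ \<omega>. f \<omega> \<partial>M)" for f
    by (intro nn_integral_cong) simp
  then have "(\<integral>\<^sup>+ \<omega>. ennreal (?U (\<xi> t \<omega>)) \<partial>M) = (\<integral>\<^sup>+ \<omega>. ennreal (\<xi> T \<omega>) \<partial>M)"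
    using stable_half_bridge_GIG_cylinder[OF M c \<gamma> bridge t space_in_cylinder_sets] by simp
  then show "integrable M (\<lambda>\<omega>. ?U (\<xi> t \<omega>))"
    using nonneg stable_half_bridge_GIG_terminal_mean[OF M c \<gamma> _ bridge] t
    by (intro integrableI_nonneg) auto
qed

lemma integrable_stable_half_bridge_GIG_terminal:
  fixes n :: nat
  assumes M: "prob_space M" and c: "c > 0" and \<gamma>: "\<gamma> > 0" and T: "T > 0"
    and bridge: "stable_half_bridge M c T (f_GIG (real n - 1/2) (c * T) \<gamma>) \<xi>"
  shows "integrable M (\<xi> T)"
proof (rule integrableI_nonneg)
  show "\<xi> T \<in> borel_measurable M" using bridge T by (simp add: stable_half_bridge_def)
  show "AE \<omega> in M. \<xi> T \<omega> \<ge> 0"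
    using bridge T by (intro stable_half_bridge_AE_nonneg) auto
  show "(\<integral>\<^sup>+ \<omega>. ennreal (\<xi> T \<omega>) \<partial>M) < \<infinity>"
    using stable_half_bridge_GIG_terminal_mean[OF assms] by simp
qed

theorem mainTheorem5:
  fixes M :: "'a measure" and \<xi> :: "real \<Rightarrow> 'a \<Rightarrow> real"
    and c \<gamma> T t :: real and n :: nat
  assumes "prob_space M"
    and "c > 0" and "\<gamma> > 0" and "T > 0" and "n \<ge> 1"
    and "stable_half_bridge M c T (f_GIG (real n - 1/2) (c * T) \<gamma>) \<xi>"
    and "0 \<le> t" and "t < T"
  shows "AE \<omega> in M.
           real_cond_exp M (natural_filtration M \<xi> t) (\<xi> T) \<omega> =
             (\<Sum>k=0..n+1. real ((n+1) choose k) * IG_moment c \<gamma> (n + 1 - k) (T - t) * \<xi> t \<omega> ^ k)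
           / (\<Sum>k=0..n. real (n choose k) * IG_moment c \<gamma> (n - k) (T - t) * \<xi> t \<omega> ^ k)"
proof -
  note M = assms(1) and c = assms(2) and \<gamma> = assms(3) and T = assms(4)
    and bridge = assms(6) and t = assms(7,8)
  interpret prob_space M by (rule M)
  have \<xi>_meas: "\<forall>s\<in>{0..t}. \<xi> s \<in> borel_measurable M"
    using bridge t by (auto simp: stable_half_bridge_def)
  have "AE \<omega> in M. real_cond_exp M (natural_filtration M \<xi> t) (\<xi> T) \<omega> = GIG_bridge_mean c \<gamma> (T - t) n (\<xi> t \<omega>)"
  proof (rule real_cond_exp_eqI_Int_stable[OF finite_measure_axioms subalgebra_natural_filtration[OF \<xi>_meas]
        sets_natural_filtration Int_stable_cylinder_sets cylinder_sets_subset_Pow space_in_cylinder_sets])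
    show "integrable M (\<xi> T)" by (rule integrable_stable_half_bridge_GIG_terminal[OF M c \<gamma> T bridge])
    show "AE \<omega> in M. \<xi> T \<omega> \<ge> 0" using T by (intro stable_half_bridge_AE_nonneg[OF bridge]) auto
    show "(\<lambda>\<omega>. GIG_bridge_mean c \<gamma> (T - t) n (\<xi> t \<omega>)) \<in> borel_measurable (natural_filtration M \<xi> t)"
      using t by (intro measurable_compose[OF measurable_natural_filtration GIG_bridge_mean_measurable]) auto
  qed (use integrable_GIG_bridge_mean_stable_half_bridge[OF M c \<gamma> bridge t]
         stable_half_bridge_GIG_cylinder[OF M c \<gamma> bridge t] in auto)
  then show ?thesis unfolding GIG_bridge_mean_def IG_shifted_moment_def .
qed

end
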